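(* Consider the information processing system below operated under an arbitrary inspection policy. Fix a job index $i\in\mathbb{N}$ and $x>0$. Let $S^F_i(h,l)$ and $\widehat H^F_i$ denote the values of $S_{i,t}(h,l)$ and $\widehat H_{i,t}$ at the time job $i$ departs from the system, and let $$\mathcal{G}_x=\{\exists h'\in\mathcal{H}\text{ such that } S^F_i(h',l)\ge x\ \ \forall l\in\mathcal{H},\,l\neq h'\}.$$ Then for all $h\in\mathcal{H}$, $$\mathbb{P}(\widehat H^F_i\neq h,\ \mathcal{G}_x\mid H_i=h)\le c_\mathcal{H}\exp(-x).$$
   Context: Model: jobs arrive by a rate-1 Poisson process; job $i$ has a hidden label $H_i$ in a finite set $\mathcal{H}$ with $|\mathcal{H}|=c_\mathcal{H}$, i.i.d. with a prior $\pi$ having positive entries. There are finitely many experts, each with a type $k$ in a finite set $\mathcal{K}$; a type-$k$ expert's inspection lasts an independent exponential time of mean $1/\mu_k$ and its outcome, if it is the $j$-th inspection of job $i$, is $X_{i,j}\in\mathcal{X}$ ($\mathcal{X}$ finite) with law $p(H_i,k,\cdot)$, independent of everything else. An inspection policy may, using all past history, assign idle experts to jobs and let jobs depart with a classification. Let $N_{i,t}$ be the number of inspections job $i$ has received (completed) by time $t$, $K_{i,j}$ the type of the expert performing its $j$-th inspection, and $$S_{i,t}(h,l)=\sum_{j=1}^{N_{i,t}}\ln\frac{p(h,K_{i,j},X_{i,j})}{p(l,K_{i,j},X_{i,j})},\qquad h,l\in\mathcal{H}.$$ $\widehat H_{i,t}$ is the maximum-likelihood estimator $\widehat H_{i,t}\in\arg\max_{h\in\mathcal{H}}\prod_{j=1}^{N_{i,t}}p(h,K_{i,j},X_{i,j})$,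 ties broken arbitrarily. *)

theory Defs
  imports "HOL-Probability.Probability"
begin

text \<open>Log-likelihood ratio statistic S(h,l) of a job after its observations at
  global event steps 1..N; obs n = Some (k, y) means that at step n the job
  completed an inspection by a type-k expert with outcome y, None that no
  inspection of the job completed at step n.\<close>
definition llr_stat :: "('h \<Rightarrow> 'k \<Rightarrow> 'x \<Rightarrow> real) \<Rightarrow> (nat \<Rightarrow> ('k \<times> 'x) option) \<Rightarrow> nat \<Rightarrow> 'h \<Rightarrow> 'h \<Rightarrow> real" where
  "llr_stat p obs N h l =
     (\<Sum>n\<in>{1..N}. (case obs n of None \<Rightarrow> 0 | Some (k, y) \<Rightarrow> ln (p h k y / p l k y)))"

definition likelihood :: "('h \<Rightarrow> 'k \<Rightarrow> 'x \<Rightarrow> real) \<Rightarrow> (nat \<Rightarrow> ('k \<times> 'x) option) \<Rightarrow> nat \<Rightarrow> 'h \<Rightarrow> real" where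
  "likelihood p obs N h =
     (\<Prod>n\<in>{1..N}. (case obs n of None \<Rightarrow> 1 | Some (k, y) \<Rightarrow> p h k y))"

end

theory Submission
  imports Defs
begin

text \<open>Fix a competing label h' \<noteq> h. On the event H = h, the likelihood ratio
  exp (S(h', h)) is a mean-one martingale: each new inspection multiplies it by
  p(h',k,y)/p(h,k,y), whose expectation under the true law p(h,k,\<cdot>) is 1, and steps
  without an inspection leave it unchanged. Markov's inequality at each fixed time,
  together with monotone convergence along the stopping time, bounds the probability
  that S(h', h) \<ge> x at departure by e^{-x} P(H = h). If a label h' beats every other
  label by x > 0 at departure, it is the maximum-likelihood estimate, so a
  misclassification of a job with label h on this event forces S(h', h) \<ge> x for some
  h' \<noteq> h; a union bound over the fewer than |H| competitors gives the claim.\<close>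

lemma integrable_finite_range:
  fixes f :: "'a \<Rightarrow> real"
  assumes "finite_measure M" "f \<in> borel_measurable M" "finite (f ` space M)"
  shows "integrable M f"
proof -
  interpret finite_measure M by fact
  show ?thesis
    using assms(2,3)
    by (intro integrable_const_bound[where B = "Max (abs ` f ` space M)"])
      (auto intro!: AE_I2 Max_ge finite_imageI)
qed

lemma integral_finite_range_law:
  fixes g \<psi> :: "'a \<Rightarrow> real"
  assumes M: "finite_measure M" and sub: "subalgebra M N"
    and g: "g \<in> borel_measurable N" "finite (g ` space M)"
    and S: "S \<in> sets M"
    and \<psi>: "integrable M \<psi>"
    and law: "\<And>A. A \<in> sets N \<Longrightarrow> measure M (A \<inter> S) = (\<integral>w. indicator A w * \<psi> w \<partial>M)"
  shows "(\<integral>w. g w * indicator S w \<partial>M) = (\<integral>w. g w * \<psi> w \<partial>M)"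
proof -
  interpret finite_measure M by (rule M)
  define level where "level v = {w\<in>space M. g w = v}" for v
  have level_N: "level v \<in> sets N" for v
  proof -
    have "level v = g -` {v} \<inter> space N" using sub by (auto simp: level_def subalgebra_def)
    then show ?thesis using measurable_sets[OF g(1)] by simp
  qed
  then have level_M: "level v \<in> sets M" for v using sub by (auto simp: subalgebra_def)
  have g_split: "g w * f w = (\<Sum>v\<in>g ` space M. v * (indicator (level v) w * f w))"
    if "w \<in> space M" for w and f :: "'a \<Rightarrow> real"
  proof -
    have "(\<Sum>v\<in>g ` space M. v * (indicator (level v) w * f w))
        = (\<Sum>v\<in>g ` space M. if v = g w then g w * f w else 0)"
      by (rule sum.cong) (auto simp: level_def that)
    also have "\<dots> = g w * f w" using g(2) that by simp
    finally show ?thesis ..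
  qed
  have int_level: "integrable M (\<lambda>w. indicator (level v) w * \<psi> w)" for v
    using integrable_real_mult_indicator[OF level_M \<psi>] by (simp add: mult_ac)
  have "(\<integral>w. g w * indicator S w \<partial>M)
      = (\<integral>w. (\<Sum>v\<in>g ` space M. v * (indicator (level v) w * indicator S w)) \<partial>M)"
    by (intro Bochner_Integration.integral_cong refl g_split)
  also have "\<dots> = (\<Sum>v\<in>g ` space M. (\<integral>w. v * (indicator (level v) w * indicator S w) \<partial>M))"
    by (rule Bochner_Integration.integral_sum) (use level_M S in \<open>auto simp: indicator_inter_arith[symmetric] less_top[symmetric]\<close>)
  also have "\<dots> = (\<Sum>v\<in>g ` space M. v * measure M (level v \<inter> S))"
    using level_M S by (simp add: indicator_inter_arith[symmetric] Int_absorb2 sets.sets_into_space le_infI1)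
  also have "\<dots> = (\<Sum>v\<in>g ` space M. v * (\<integral>w. indicator (level v) w * \<psi> w \<partial>M))"
    using law[OF level_N] by simp
  also have "\<dots> = (\<integral>w. (\<Sum>v\<in>g ` space M. v * (indicator (level v) w * \<psi> w)) \<partial>M)"
    using int_level by (subst Bochner_Integration.integral_sum) auto
  also have "\<dots> = (\<integral>w. g w * \<psi> w \<partial>M)"
    by (intro Bochner_Integration.integral_cong refl g_split[symmetric])
  finally show ?thesis .
qed

definition obs_ratio :: "('h \<Rightarrow> 'k \<Rightarrow> 'x \<Rightarrow> real) \<Rightarrow> 'h \<Rightarrow> 'h \<Rightarrow> ('k \<times> 'x) option \<Rightarrow> real" where
  "obs_ratio p h l ob = (case ob of None \<Rightarrow> 1 | Some (k, y) \<Rightarrow> p h k y / p l k y)"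

lemma llr_stat_0 [simp]: "llr_stat p obs 0 h l = 0"
  by (simp add: llr_stat_def)

lemma llr_stat_Suc:
  "llr_stat p obs (Suc n) h l =
     llr_stat p obs n h l + (case obs (Suc n) of None \<Rightarrow> 0 | Some (k, y) \<Rightarrow> ln (p h k y / p l k y))"
  by (simp add: llr_stat_def)

lemma exp_llr_stat_Suc:
  assumes "\<And>g k y. p g k y > 0"
  shows "exp (llr_stat p obs (Suc n) h l) = exp (llr_stat p obs n h l) * obs_ratio p h l (obs (Suc n))"
  using assms by (simp add: llr_stat_Suc obs_ratio_def exp_add split: option.split)

lemma finite_range_llr_stat:
  "finite (range (\<lambda>obs :: nat \<Rightarrow> ('k::finite \<times> 'x::finite) option. llr_stat p obs n h l))"
proof (induction n)
  case 0
  then show ?case by simp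
next
  case (Suc n)
  let ?step = "\<lambda>ob :: ('k \<times> 'x) option. case ob of None \<Rightarrow> 0 | Some (k, y) \<Rightarrow> ln (p h k y / p l k y)"
  have "range (\<lambda>obs. llr_stat p obs (Suc n) h l)
      \<subseteq> (\<lambda>(a, b). a + b) ` (range (\<lambda>obs. llr_stat p obs n h l) \<times> range ?step)"
    by (auto simp: llr_stat_Suc)
  then show ?case by (rule finite_subset) (use Suc in auto)
qed

lemma likelihood_pos:
  assumes "\<And>g k y. p g k y > 0"
  shows "likelihood p obs N g > 0"
  unfolding likelihood_def using assms by (intro prod_pos) (auto split: option.split)

lemma llr_stat_eq_ln_likelihood:
  assumes p_pos: "\<And>g k y. p g k y > 0"
  shows "llr_stat p obs N h l = ln (likelihood p obs N h) - ln (likelihood p obs N l)"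
proof -
  have ln_lik: "ln (likelihood p obs N g) =
      (\<Sum>n\<in>{1..N}. ln (case obs n of None \<Rightarrow> 1 | Some (k, y) \<Rightarrow> p g k y))" for g
    unfolding likelihood_def using p_pos
    by (intro ln_prod) (auto split: option.split simp: less_imp_neq[symmetric])
  show ?thesis
    unfolding llr_stat_def ln_lik sum_subtractf[symmetric] using p_pos
    by (intro sum.cong refl) (auto simp: ln_divide_pos split: option.split)
qed

lemma dominant_label_is_ml_estimate:
  assumes p_pos: "\<And>g k y. p g k y > 0"
    and ml: "\<And>g. likelihood p obs N g \<le> likelihood p obs N h\<^sub>M\<^sub>L"
    and dominant: "\<And>l. l \<noteq> h' \<Longrightarrow> x \<le> llr_stat p obs N h' l"
    and "x > 0"
  shows "h' = h\<^sub>M\<^sub>L"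
proof (rule ccontr)
  assume "h' \<noteq> h\<^sub>M\<^sub>L"
  then have "x \<le> ln (likelihood p obs N h') - ln (likelihood p obs N h\<^sub>M\<^sub>L)"
    using dominant[of h\<^sub>M\<^sub>L] by (simp add: llr_stat_eq_ln_likelihood[OF p_pos])
  also have "\<dots> \<le> 0"
    using ml[of h'] likelihood_pos[of p, OF p_pos] by simp
  finally show False using \<open>x > 0\<close> by simp
qed

locale inspection_system = prob_space M
  for M :: "'a measure" and F :: "nat \<Rightarrow> 'a measure"
    and H :: "'a \<Rightarrow> 'h::finite"
    and Obs :: "nat \<Rightarrow> 'a \<Rightarrow> ('k::finite \<times> 'x::finite) option"
    and p :: "'h \<Rightarrow> 'k \<Rightarrow> 'x \<Rightarrow> real" +
  assumes F_sub: "\<And>n. subalgebra M (F n)"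
    and F_mono: "\<And>n. sets (F n) \<subseteq> sets (F (Suc n))"
    and p_pos: "\<And>g k y. p g k y > 0"
    and p_sum: "\<And>g k. (\<Sum>y\<in>UNIV. p g k y) = 1"
    and H_meas: "H \<in> measurable (F 0) (count_space UNIV)"
    and Obs_meas: "\<And>n. Obs n \<in> measurable (F n) (count_space UNIV)"
    and Obs_law: "\<And>n A k y. A \<in> sets (F n) \<Longrightarrow>
        measure M (A \<inter> {\<omega>\<in>space M. Obs (Suc n) \<omega> = Some (k, y)}) =
        (\<integral>\<omega>. indicator A \<omega> * indicator {\<omega>\<in>space M. \<exists>z. Obs (Suc n) \<omega> = Some (k, z)} \<omega>
               * p (H \<omega>) k y \<partial>M)"
begin

lemma space_F [simp]: "space (F n) = space M"
  using F_sub[of n] by (simp add: subalgebra_def)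

lemma sets_F_subset: "sets (F n) \<subseteq> sets M"
  using F_sub[of n] by (simp add: subalgebra_def)

lemma measurable_F_mono: "m \<le> n \<Longrightarrow> f \<in> measurable (F m) X \<Longrightarrow> f \<in> measurable (F n) X"
  using measurable_mono[of X X "F m" "F n"] lift_Suc_mono_le[of "\<lambda>n. sets (F n)", OF F_mono] by auto

lemma measurable_F_imp_M: "f \<in> measurable (F n) X \<Longrightarrow> f \<in> measurable M X"
  using measurable_mono[of X X "F n" M] sets_F_subset by auto

lemma sets_label: "{w\<in>space M. H w = h} \<in> sets (F n)"
proof -
  have "H -` {h} \<inter> space (F n) \<in> sets (F n)"
    using measurable_F_mono[OF _ H_meas] by (intro measurable_sets) auto
  then show ?thesis by (simp add: vimage_def Int_def conj_commute)
qed

lemma sets_Obs_eq: "{w\<in>space M. P (Obs n w)} \<in> sets M"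
proof -
  have "Obs n -` {z. P z} \<inter> space M \<in> sets M"
    using measurable_F_imp_M[OF Obs_meas] by (intro measurable_sets) auto
  then show ?thesis by (simp add: vimage_def Int_def conj_commute)
qed

lemma p_le_1: "p g k y \<le> 1"
proof -
  have "p g k y \<le> (\<Sum>y\<in>UNIV. p g k y)"
    using p_pos by (intro member_le_sum) (auto intro: less_imp_le)
  then show ?thesis using p_sum by simp
qed

lemma integral_Obs_eq:
  assumes Z: "Z \<in> borel_measurable (F n)" "finite (Z ` space M)"
    and Z_label: "\<And>w. w \<in> space M \<Longrightarrow> H w \<noteq> h \<Longrightarrow> Z w = 0"
  shows "(\<integral>w. Z w * indicator {w\<in>space M. Obs (Suc n) w = Some (k, y)} w \<partial>M) =
    p h k y * (\<integral>w. Z w * indicator {w\<in>space M. \<exists>z. Obs (Suc n) w = Some (k, z)} w \<partial>M)"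
proof -
  let ?type = "{w\<in>space M. \<exists>z. Obs (Suc n) w = Some (k, z)}"
  have "(\<integral>w. Z w * indicator {w\<in>space M. Obs (Suc n) w = Some (k, y)} w \<partial>M)
      = (\<integral>w. Z w * (indicator ?type w * p (H w) k y) \<partial>M)"
  proof (rule integral_finite_range_law[OF finite_measure_axioms F_sub Z sets_Obs_eq])
    have "(\<lambda>w. p (H w) k y) \<in> borel_measurable M"
      using measurable_compose[OF measurable_F_imp_M[OF H_meas], of "\<lambda>g. p g k y" borel] by simp
    then have "(\<lambda>w. indicator ?type w * p (H w) k y) \<in> borel_measurable M"
      by (rule borel_measurable_times[OF borel_measurable_indicator[OF sets_Obs_eq]])
    moreover have "\<bar>indicator ?type w * p (H w) k y\<bar> \<le> 1" for w
      using p_le_1[of "H w" k y] p_pos[of "H w" k y] by (simp add: indicator_def)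
    ultimately show "integrable M (\<lambda>w. indicator ?type w * p (H w) k y)"
      by (intro integrable_const_bound[where B = 1] AE_I2) simp_all
  qed (simp add: Obs_law mult.assoc)
  also have "\<dots> = (\<integral>w. p h k y * (Z w * indicator ?type w) \<partial>M)"
  proof (rule Bochner_Integration.integral_cong[OF refl])
    fix w assume "w \<in> space M"
    then show "Z w * (indicator ?type w * p (H w) k y) = p h k y * (Z w * indicator ?type w)"
      using Z_label by (cases "H w = h") simp_all
  qed
  finally show ?thesis by simp
qed

lemma obs_ratio_split:
  assumes "w \<in> space M"
  shows "obs_ratio p h' h (Obs (Suc n) w) =
    indicator {w\<in>space M. Obs (Suc n) w = None} w +
    (\<Sum>k\<in>UNIV. \<Sum>y\<in>UNIV. p h' k y / p h k y * indicator {w\<in>space M. Obs (Suc n) w = Some (k, y)} w)"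
proof (cases "Obs (Suc n) w")
  case None
  then show ?thesis using assms by (simp add: obs_ratio_def)
next
  case (Some ob)
  obtain k0 y0 where ob: "ob = (k0, y0)" by (cases ob)
  have "p h' k y / p h k y * indicator {w\<in>space M. Obs (Suc n) w = Some (k, y)} w
      = (if y = y0 then if k = k0 then p h' k0 y0 / p h k0 y0 else 0 else 0)" for k y
    using assms Some ob by (auto simp: indicator_def)
  then show ?thesis using Some ob by (simp add: obs_ratio_def)
qed

lemma one_split_by_type:
  assumes "w \<in> space M"
  shows "indicator {w\<in>space M. Obs (Suc n) w = None} w +
    (\<Sum>k\<in>UNIV. indicator {w\<in>space M. \<exists>z. Obs (Suc n) w = Some (k, z)} w) = (1::real)"
proof (cases "Obs (Suc n) w")
  case None
  then show ?thesis using assms by simp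
next
  case (Some ob)
  obtain k0 y0 where ob: "ob = (k0, y0)" by (cases ob)
  have "(\<Sum>k\<in>UNIV. indicator {w\<in>space M. \<exists>z. Obs (Suc n) w = Some (k, z)} w)
      = (\<Sum>k\<in>UNIV. if k = k0 then 1 else (0::real))"
    using assms Some ob by (intro sum.cong refl) (auto simp: indicator_def)
  then show ?thesis using Some by simp
qed

lemma integral_mult_obs_ratio:
  assumes Z: "Z \<in> borel_measurable (F n)" "finite (Z ` space M)"
    and Z_label: "\<And>w. w \<in> space M \<Longrightarrow> H w \<noteq> h \<Longrightarrow> Z w = 0"
  shows "(\<integral>w. Z w * obs_ratio p h' h (Obs (Suc n) w) \<partial>M) = (\<integral>w. Z w \<partial>M)"
proof -
  define none where "none = {w\<in>space M. Obs (Suc n) w = None}"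
  define obs where "obs k y = {w\<in>space M. Obs (Suc n) w = Some (k, y)}" for k y
  define type where "type k = {w\<in>space M. \<exists>z. Obs (Suc n) w = Some (k, z)}" for k
  have Z_ind: "integrable M (\<lambda>w. Z w * indicator A w)" if "A \<in> sets M" for A
    using integrable_finite_range[OF finite_measure_axioms measurable_F_imp_M[OF Z(1)] Z(2)]
    by (rule integrable_real_mult_indicator[OF that])
  have int_none: "integrable M (\<lambda>w. Z w * indicator none w)"
    unfolding none_def by (rule Z_ind[OF sets_Obs_eq])
  have int_obs: "integrable M (\<lambda>w. c * (Z w * indicator (obs k y) w))" for c k y
    unfolding obs_def by (rule integrable_mult_right[OF Z_ind[OF sets_Obs_eq]])
  have int_type: "integrable M (\<lambda>w. Z w * indicator (type k) w)" for k
    unfolding type_def by (rule Z_ind[OF sets_Obs_eq])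
  have "(\<integral>w. Z w * obs_ratio p h' h (Obs (Suc n) w) \<partial>M) = (\<integral>w. Z w * indicator none w +
      (\<Sum>k\<in>UNIV. \<Sum>y\<in>UNIV. p h' k y / p h k y * (Z w * indicator (obs k y) w)) \<partial>M)"
    by (intro Bochner_Integration.integral_cong refl)
      (simp add: obs_ratio_split none_def obs_def distrib_left sum_distrib_left mult_ac)
  also have "\<dots> = (\<integral>w. Z w * indicator none w \<partial>M) +
      (\<Sum>k\<in>UNIV. \<Sum>y\<in>UNIV. p h' k y / p h k y * (\<integral>w. Z w * indicator (obs k y) w \<partial>M))"
    using int_none int_obs by (simp add: Bochner_Integration.integrable_sum)
  also have "\<dots> = (\<integral>w. Z w * indicator none w \<partial>M) +
      (\<Sum>k\<in>UNIV. (\<Sum>y\<in>UNIV. p h' k y) * (\<integral>w. Z w * indicator (type k) w \<partial>M))"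
    using p_pos
    by (simp add: obs_def type_def integral_Obs_eq[OF Z Z_label] sum_distrib_right less_imp_neq[symmetric])
  also have "\<dots> = (\<integral>w. Z w * indicator none w \<partial>M) + (\<Sum>k\<in>UNIV. \<integral>w. Z w * indicator (type k) w \<partial>M)"
    by (simp add: p_sum)
  also have "\<dots> = (\<integral>w. Z w * indicator none w + (\<Sum>k\<in>UNIV. Z w * indicator (type k) w) \<partial>M)"
    by (subst Bochner_Integration.integral_add[OF int_none])
      (intro Bochner_Integration.integrable_sum int_type, simp only: Bochner_Integration.integral_sum[OF int_type])
  also have "\<dots> = (\<integral>w. Z w \<partial>M)"
    by (intro Bochner_Integration.integral_cong refl)
      (simp add: none_def type_def one_split_by_type distrib_left[symmetric] sum_distrib_left[symmetric])
  finally show ?thesis .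
qed

definition lr_process :: "'h \<Rightarrow> 'h \<Rightarrow> nat \<Rightarrow> 'a \<Rightarrow> real" where
  "lr_process h' h n w = indicator {w\<in>space M. H w = h} w * exp (llr_stat p (\<lambda>m. Obs m w) n h' h)"

lemma lr_process_Suc:
  "lr_process h' h (Suc n) w = lr_process h' h n w * obs_ratio p h' h (Obs (Suc n) w)"
  by (simp add: lr_process_def exp_llr_stat_Suc[OF p_pos])

lemma llr_stat_measurable: "(\<lambda>w. llr_stat p (\<lambda>m. Obs m w) n h' h) \<in> borel_measurable (F n)"
  unfolding llr_stat_def
  by (intro borel_measurable_sum measurable_compose[OF measurable_F_mono[OF _ Obs_meas]]) auto

lemma lr_process_measurable: "lr_process h' h n \<in> borel_measurable (F n)"
  unfolding lr_process_def
  by (intro borel_measurable_times borel_measurable_indicator sets_label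
      measurable_compose[OF llr_stat_measurable borel_measurable_exp])

lemma finite_range_lr_process: "finite (lr_process h' h n ` space M)"
proof (rule finite_subset)
  show "lr_process h' h n ` space M
      \<subseteq> (\<lambda>(a, b). a * exp b) ` ({0, 1} \<times> range (\<lambda>obs. llr_stat p obs n h' h))"
    by (auto simp: lr_process_def indicator_def)
  show "finite \<dots>"
    by (intro finite_imageI finite_cartesian_product finite_range_llr_stat) simp
qed

lemma integral_lr_process: "(\<integral>w. lr_process h' h n w \<partial>M) = prob {w\<in>space M. H w = h}"
proof (induction n)
  case 0
  show ?case by (simp add: lr_process_def Int_absorb2[OF Collect_subset])
next
  case (Suc n)
  have "(\<integral>w. lr_process h' h (Suc n) w \<partial>M) = (\<integral>w. lr_process h' h n w * obs_ratio p h' h (Obs (Suc n) w) \<partial>M)"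
    by (simp add: lr_process_Suc)
  also have "\<dots> = (\<integral>w. lr_process h' h n w \<partial>M)"
    by (rule integral_mult_obs_ratio[OF lr_process_measurable finite_range_lr_process])
      (simp add: lr_process_def)
  finally show ?case using Suc.IH by simp
qed

lemma prob_llr_ge:
  "prob {w\<in>space M. H w = h \<and> x \<le> llr_stat p (\<lambda>m. Obs m w) n h' h}
     \<le> exp (- x) * prob {w\<in>space M. H w = h}"
proof -
  have integrable: "integrable M (lr_process h' h n)"
    by (rule integrable_finite_range[OF finite_measure_axioms
          measurable_F_imp_M[OF lr_process_measurable] finite_range_lr_process])
  have "{w\<in>space M. H w = h \<and> x \<le> llr_stat p (\<lambda>m. Obs m w) n h' h}
      = {w\<in>space M. exp x \<le> lr_process h' h n w}"
    by (auto simp: lr_process_def indicator_def)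
  then have "prob {w\<in>space M. H w = h \<and> x \<le> llr_stat p (\<lambda>m. Obs m w) n h' h}
      \<le> (\<integral>w. lr_process h' h n w \<partial>M) / exp x"
    using integral_Markov_inequality_measure[OF integrable sets.top] by (simp add: lr_process_def)
  then show ?thesis
    by (simp add: integral_lr_process exp_minus field_simps)
qed

lemma sets_llr_ge: "{w\<in>space M. x \<le> llr_stat p (\<lambda>m. Obs m w) n h' h} \<in> sets (F n)"
proof -
  have "(\<lambda>w. llr_stat p (\<lambda>m. Obs m w) n h' h) -` {x..} \<inter> space (F n) \<in> sets (F n)"
    by (rule measurable_sets[OF llr_stat_measurable]) simp
  then show ?thesis by (simp add: vimage_def Int_def conj_commute)
qed

end

locale stopped_inspection_system = inspection_system M F H Obs p
  for M :: "'a measure" and F :: "nat \<Rightarrow> 'a measure"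
    and H :: "'a \<Rightarrow> 'h::finite"
    and Obs :: "nat \<Rightarrow> 'a \<Rightarrow> ('k::finite \<times> 'x::finite) option"
    and p :: "'h \<Rightarrow> 'k \<Rightarrow> 'x \<Rightarrow> real" +
  fixes T :: "'a \<Rightarrow> enat"
  assumes T_stop: "\<And>n. {\<omega>\<in>space M. T \<omega> \<le> enat n} \<in> sets (F n)"
    and T_gone: "\<And>\<omega> n. \<omega> \<in> space M \<Longrightarrow> T \<omega> \<le> enat n \<Longrightarrow> Obs (Suc n) \<omega> = None"
begin

lemma llr_stat_stopped:
  assumes "w \<in> space M" "T w \<le> enat N" "N \<le> n"
  shows "llr_stat p (\<lambda>m. Obs m w) n h' h = llr_stat p (\<lambda>m. Obs m w) N h' h"
  using assms(3)
proof (induction n rule: dec_induct)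
  case (step n)
  have "T w \<le> enat n" using assms(2) \<open>N \<le> n\<close> by (simp add: order_trans)
  then show ?case using step.IH T_gone[OF assms(1)] by (simp add: llr_stat_Suc)
qed simp

definition llr_ge_by :: "'h \<Rightarrow> 'h \<Rightarrow> real \<Rightarrow> nat \<Rightarrow> 'a set" where
  "llr_ge_by h' h x n =
     {w\<in>space M. T w \<le> enat n \<and> H w = h \<and> x \<le> llr_stat p (\<lambda>m. Obs m w) n h' h}"

lemma sets_llr_ge_by: "llr_ge_by h' h x n \<in> sets M"
proof -
  have "llr_ge_by h' h x n = {w\<in>space M. T w \<le> enat n} \<inter> {w\<in>space M. H w = h}
      \<inter> {w\<in>space M. x \<le> llr_stat p (\<lambda>m. Obs m w) n h' h}"
    by (auto simp: llr_ge_by_def)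
  then show ?thesis
    by (simp only:) (intro subsetD[OF sets_F_subset[of n]] sets.Int T_stop sets_label sets_llr_ge)
qed

lemma incseq_llr_ge_by: "incseq (llr_ge_by h' h x)"
proof (rule incseq_SucI)
  fix n show "llr_ge_by h' h x n \<subseteq> llr_ge_by h' h x (Suc n)"
    using llr_stat_stopped[of _ n "Suc n"] order_trans[of _ "enat n" "enat (Suc n)"]
    by (auto simp: llr_ge_by_def)
qed

lemma stopped_llr_ge_eq_UN:
  "{w\<in>space M. T w \<noteq> \<infinity> \<and> H w = h \<and> x \<le> llr_stat p (\<lambda>m. Obs m w) (the_enat (T w)) h' h}
     = (\<Union>n. llr_ge_by h' h x n)"
proof (intro equalityI subsetI)
  fix w assume "w \<in> {w\<in>space M. T w \<noteq> \<infinity> \<and> H w = h \<and>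
      x \<le> llr_stat p (\<lambda>m. Obs m w) (the_enat (T w)) h' h}"
  then show "w \<in> (\<Union>n. llr_ge_by h' h x n)"
    by (auto simp: llr_ge_by_def intro!: exI[of _ "the_enat (T w)"])
next
  fix w assume "w \<in> (\<Union>n. llr_ge_by h' h x n)"
  then obtain n N where "w \<in> space M" "T w = enat N" "N \<le> n" "H w = h"
      "x \<le> llr_stat p (\<lambda>m. Obs m w) n h' h"
    by (cases "T w") (auto simp: llr_ge_by_def)
  then show "w \<in> {w\<in>space M. T w \<noteq> \<infinity> \<and> H w = h \<and>
      x \<le> llr_stat p (\<lambda>m. Obs m w) (the_enat (T w)) h' h}"
    using llr_stat_stopped[of w N n] by simp
qed

lemma prob_stopped_llr_ge:
  "prob {w\<in>space M. T w \<noteq> \<infinity> \<and> H w = h \<and> x \<le> llr_stat p (\<lambda>m. Obs m w) (the_enat (T w)) h' h}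
     \<le> exp (- x) * prob {w\<in>space M. H w = h}"
proof -
  have "prob (llr_ge_by h' h x n) \<le> exp (- x) * prob {w\<in>space M. H w = h}" for n
  proof -
    have "{w\<in>space M. H w = h \<and> x \<le> llr_stat p (\<lambda>m. Obs m w) n h' h}
        = {w\<in>space M. H w = h} \<inter> {w\<in>space M. x \<le> llr_stat p (\<lambda>m. Obs m w) n h' h}"
      by auto
    then have "{w\<in>space M. H w = h \<and> x \<le> llr_stat p (\<lambda>m. Obs m w) n h' h} \<in> sets M"
      by (simp only:) (intro subsetD[OF sets_F_subset[of n]] sets.Int sets_label sets_llr_ge)
    then have "prob (llr_ge_by h' h x n)
        \<le> prob {w\<in>space M. H w = h \<and> x \<le> llr_stat p (\<lambda>m. Obs m w) n h' h}"
      by (rule finite_measure_mono[rotated]) (auto simp: llr_ge_by_def)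
    then show ?thesis using prob_llr_ge order_trans by blast
  qed
  moreover have "(\<lambda>n. prob (llr_ge_by h' h x n)) \<longlonglongrightarrow> prob (\<Union>n. llr_ge_by h' h x n)"
    using sets_llr_ge_by incseq_llr_ge_by by (intro finite_Lim_measure_incseq) auto
  ultimately show ?thesis
    unfolding stopped_llr_ge_eq_UN by (intro LIMSEQ_le_const2) auto
qed

lemma prob_misclassified_with_dominant:
  fixes Hhat :: "'a \<Rightarrow> 'h"
  assumes Hhat_ML: "\<And>\<omega> g. \<omega> \<in> space M \<Longrightarrow> T \<omega> \<noteq> \<infinity> \<Longrightarrow>
        likelihood p (\<lambda>n. Obs n \<omega>) (the_enat (T \<omega>)) g
          \<le> likelihood p (\<lambda>n. Obs n \<omega>) (the_enat (T \<omega>)) (Hhat \<omega>)"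
    and "x > 0"
  shows "prob {\<omega>\<in>space M. T \<omega> \<noteq> \<infinity> \<and> Hhat \<omega> \<noteq> h \<and>
            (\<exists>h'. \<forall>l. l \<noteq> h' \<longrightarrow> llr_stat p (\<lambda>n. Obs n \<omega>) (the_enat (T \<omega>)) h' l \<ge> x)
            \<and> H \<omega> = h}
         \<le> real CARD('h) * exp (- x) * prob {\<omega>\<in>space M. H \<omega> = h}"
    (is "prob ?E \<le> _")
proof -
  let ?S = "\<lambda>h'. {w\<in>space M. T w \<noteq> \<infinity> \<and> H w = h \<and>
      x \<le> llr_stat p (\<lambda>m. Obs m w) (the_enat (T w)) h' h}"
  have sets_S: "?S h' \<in> sets M" for h'
    unfolding stopped_llr_ge_eq_UN using sets_llr_ge_by by blast
  have "?E \<subseteq> (\<Union>h'\<in>UNIV - {h}. ?S h')"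
  proof
    fix w assume "w \<in> ?E"
    then obtain h' where w: "w \<in> space M" "T w \<noteq> \<infinity>" "Hhat w \<noteq> h" "H w = h"
      and dominant: "\<And>l. l \<noteq> h' \<Longrightarrow> x \<le> llr_stat p (\<lambda>n. Obs n w) (the_enat (T w)) h' l"
      by blast
    have "h' = Hhat w"
      by (rule dominant_label_is_ml_estimate[OF p_pos Hhat_ML[OF w(1,2)] dominant \<open>x > 0\<close>])
    then show "w \<in> (\<Union>h'\<in>UNIV - {h}. ?S h')"
      using w dominant[of h] by auto
  qed
  then have "prob ?E \<le> prob (\<Union>h'\<in>UNIV - {h}. ?S h')"
    using sets_S by (intro finite_measure_mono) auto
  also have "\<dots> \<le> (\<Sum>h'\<in>UNIV - {h}. prob (?S h'))"
    using sets_S by (intro measure_UNION_le) auto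
  also have "\<dots> \<le> (\<Sum>h'\<in>UNIV - {h}. exp (- x) * prob {w\<in>space M. H w = h})"
    by (intro sum_mono prob_stopped_llr_ge)
  also have "\<dots> \<le> real CARD('h) * exp (- x) * prob {w\<in>space M. H w = h}"
    using card_mono[of UNIV "UNIV - {h}"] by (simp add: mult_right_mono)
  finally show ?thesis .
qed

end

theorem lemma1:
  fixes M :: "'a measure"
    and F :: "nat \<Rightarrow> 'a measure"
    and H :: "'a \<Rightarrow> 'h::finite"
    and Obs :: "nat \<Rightarrow> 'a \<Rightarrow> ('k::finite \<times> 'x::finite) option"
    and T :: "'a \<Rightarrow> enat"
    and Hhat :: "'a \<Rightarrow> 'h"
    and p :: "'h \<Rightarrow> 'k \<Rightarrow> 'x \<Rightarrow> real"
    and prior :: "'h \<Rightarrow> real"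
    and x :: real and h :: 'h
  assumes M: "prob_space M"
    and F_sub: "\<And>n. subalgebra M (F n)"
    and F_mono: "\<And>n. sets (F n) \<subseteq> sets (F (Suc n))"
    and p_pos: "\<And>g k y. p g k y > 0"
    and p_sum: "\<And>g k. (\<Sum>y\<in>UNIV. p g k y) = 1"
    and H_meas: "H \<in> measurable (F 0) (count_space UNIV)"
    and prior_def: "\<And>g. measure M {\<omega>\<in>space M. H \<omega> = g} = prior g"
    and prior_pos: "\<And>g. prior g > 0"
    and Obs_meas: "\<And>n. Obs n \<in> measurable (F n) (count_space UNIV)"
    and Obs_law: "\<And>n A k y. A \<in> sets (F n) \<Longrightarrow>
        measure M (A \<inter> {\<omega>\<in>space M. Obs (Suc n) \<omega> = Some (k, y)}) =
        (\<integral>\<omega>. indicator A \<omega> * indicator {\<omega>\<in>space M. \<exists>z. Obs (Suc n) \<omega> = Some (k, z)} \<omega>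
               * p (H \<omega>) k y \<partial>M)"
    and T_stop: "\<And>n. {\<omega>\<in>space M. T \<omega> \<le> enat n} \<in> sets (F n)"
    and T_gone: "\<And>\<omega> n. \<omega> \<in> space M \<Longrightarrow> T \<omega> \<le> enat n \<Longrightarrow> Obs (Suc n) \<omega> = None"
    and Hhat_meas: "Hhat \<in> measurable M (count_space UNIV)"
    and Hhat_ML: "\<And>\<omega> g. \<omega> \<in> space M \<Longrightarrow> T \<omega> \<noteq> \<infinity> \<Longrightarrow>
        likelihood p (\<lambda>n. Obs n \<omega>) (the_enat (T \<omega>)) g
          \<le> likelihood p (\<lambda>n. Obs n \<omega>) (the_enat (T \<omega>)) (Hhat \<omega>)"
    and x_pos: "x > 0"
  shows "measure M {\<omega>\<in>space M. T \<omega> \<noteq> \<infinity> \<and> Hhat \<omega> \<noteq> h \<and>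
            (\<exists>h'. \<forall>l. l \<noteq> h' \<longrightarrow> llr_stat p (\<lambda>n. Obs n \<omega>) (the_enat (T \<omega>)) h' l \<ge> x)
            \<and> H \<omega> = h} / measure M {\<omega>\<in>space M. H \<omega> = h}
         \<le> real CARD('h) * exp (- x)"
proof -
  \<comment> \<open>Neither Hhat_meas nor the value of the prior is needed beyond prior h > 0.\<close>
  interpret stopped_inspection_system M F H Obs p T
    by (intro stopped_inspection_system.intro inspection_system.intro
        inspection_system_axioms.intro stopped_inspection_system_axioms.intro)
      (fact M F_sub F_mono p_pos p_sum H_meas Obs_meas Obs_law T_stop T_gone)+
  show ?thesis
    using prob_misclassified_with_dominant[OF Hhat_ML x_pos] prior_pos[of h]
    by (simp add: prior_def pos_divide_le_eq)
qed

end
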